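(* Let $\langle \mathscr{A} \mid \mathscr{R} \rangle$ be a strongly $C(4)$ presentation. Then the monoid presented is left cancellative if and only if $\mathscr{R}$ contains no relation of the form $(ar, as)$ where $a \in \mathscr{A}$ and $r, s \in \mathscr{A}^*$.
   Context: A monoid presentation $\langle \mathscr{A} \mid \mathscr{R} \rangle$ consists of an alphabet $\mathscr{A}$ and a set $\mathscr{R} \subseteq \mathscr{A}^* \times \mathscr{A}^*$ of relations; the monoid presented is $\mathscr{A}^*$ modulo the smallest congruence containing $\mathscr{R}$. A relation word is a word occurring as one side of a relation. A piece is a word which occurs as a factor of two distinct relation words, or in two different (possibly overlapping) positions within one relation word; the empty word is always a piece. The presentation is $C(n)$ if no relation word can be written as a product of strictly fewer than $n$ pieces, and strongly $C(n)$ if it is $C(n)$ and additionally has no repeated relation words (no word occurs more than once as a side of a relation). *)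

theory Defs
  imports Main
begin

text \<open>A monoid presentation over the alphabet given by the type 'a: a set of
relations R, i.e. pairs of words. The presented monoid is 'a list modulo the
smallest congruence containing R.\<close>

inductive pres_cong :: "('a list \<times> 'a list) set \<Rightarrow> 'a list \<Rightarrow> 'a list \<Rightarrow> bool"
  for R :: "('a list \<times> 'a list) set" where
  base: "(u, v) \<in> R \<Longrightarrow> pres_cong R u v"
| refl: "pres_cong R u u"
| sym: "pres_cong R u v \<Longrightarrow> pres_cong R v u"
| trans: "pres_cong R u v \<Longrightarrow> pres_cong R v w \<Longrightarrow> pres_cong R u w"
| compat: "pres_cong R u v \<Longrightarrow> pres_cong R (p @ u @ q) (p @ v @ q)"

definition left_cancellative :: "('a list \<times> 'a list) set \<Rightarrow> bool" where
  "left_cancellative R \<longleftrightarrow>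
     (\<forall>x y z. pres_cong R (x @ y) (x @ z) \<longrightarrow> pres_cong R y z)"

definition rel_words :: "('a list \<times> 'a list) set \<Rightarrow> 'a list set" where
  "rel_words R = fst ` R \<union> snd ` R"

definition occurs_at :: "'a list \<Rightarrow> 'a list \<Rightarrow> nat \<Rightarrow> bool" where
  "occurs_at w u i \<longleftrightarrow> (\<exists>x y. u = x @ w @ y \<and> length x = i)"

definition is_factor :: "'a list \<Rightarrow> 'a list \<Rightarrow> bool" where
  "is_factor w u \<longleftrightarrow> (\<exists>i. occurs_at w u i)"

definition piece :: "('a list \<times> 'a list) set \<Rightarrow> 'a list \<Rightarrow> bool" where
  "piece R w \<longleftrightarrow> w = [] \<or>
     (\<exists>u\<in>rel_words R. \<exists>v\<in>rel_words R. u \<noteq> v \<and> is_factor w u \<and> is_factor w v) \<or>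
     (\<exists>u\<in>rel_words R. \<exists>i j. i \<noteq> j \<and> occurs_at w u i \<and> occurs_at w u j)"

definition small_overlap_C :: "nat \<Rightarrow> ('a list \<times> 'a list) set \<Rightarrow> bool" where
  "small_overlap_C n R \<longleftrightarrow>
     (\<forall>u\<in>rel_words R. \<not> (\<exists>ps. length ps < n \<and> (\<forall>p\<in>set ps. piece R p) \<and> concat ps = u))"

text \<open>No repeated relation words: each word occurs at most once as a side of a
relation (counting both sides of all relations).\<close>
definition no_repeated_rel_words :: "('a list \<times> 'a list) set \<Rightarrow> bool" where
  "no_repeated_rel_words R \<longleftrightarrow>
     inj_on (\<lambda>(r, b). if b then snd r else fst r) (R \<times> (UNIV :: bool set))"

definition strongly_C :: "nat \<Rightarrow> ('a list \<times> 'a list) set \<Rightarrow> bool" where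
  "strongly_C n R \<longleftrightarrow> small_overlap_C n R \<and> no_repeated_rel_words R"

end

theory Submission
  imports Defs
begin

text \<open>
If (ar, as) is a relation, then r and s are distinct, and no rewriting step applies to r:
under C(4) no relation word is a proper factor of another. So ar = as in the monoid but
r \<noteq> s.

Conversely, suppose the two sides of every relation begin with different letters and
consider a derivation from ay to az. If the leading a is never rewritten we are done.
Otherwise at some point a relation word al is replaced by its partner n. Write
n = XY n Z n, where Z n is the longest suffix of n that is a piece. The C(4) condition
ensures that, as long as the rest of the word stays guarded by Z n, no relation word
can start inside XY n except n itself; hence XY n survives until n is rewritten back,
and this must happen because n does not begin with a. Since relation words are not
repeated, n is rewritten back to al. If y was first rewritten to lt, and meanwhile only
the suffix t after Z n was rewritten, to t' say, then cancelling Z n and a by induction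
on the length of the derivation gives y ->* lt ->* lt' ->* z.
\<close>

subsection \<open>Elementary transitions\<close>

lemma append_eq_append_cases:
  "a @ b = c @ d \<Longrightarrow>
     (\<exists>w. c = a @ w \<and> b = w @ d) \<or> (\<exists>w. w \<noteq> [] \<and> a = c @ w \<and> d = w @ b)"
  by (auto simp: append_eq_append_conv2)

definition rel_pair :: "('a list \<times> 'a list) set \<Rightarrow> 'a list \<Rightarrow> 'a list \<Rightarrow> bool" where
  "rel_pair R l r \<longleftrightarrow> (l, r) \<in> R \<or> (r, l) \<in> R"

definition rewrite_step :: "('a list \<times> 'a list) set \<Rightarrow> 'a list \<Rightarrow> 'a list \<Rightarrow> bool" where
  "rewrite_step R u v \<longleftrightarrow> (\<exists>x y l r. rel_pair R l r \<and> u = x @ l @ y \<and> v = x @ r @ y)"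

lemma rel_pair_sym: "rel_pair R l r \<Longrightarrow> rel_pair R r l"
  by (auto simp: rel_pair_def)

lemma rel_pair_rel_words: "rel_pair R l r \<Longrightarrow> l \<in> rel_words R \<and> r \<in> rel_words R"
  unfolding rel_pair_def rel_words_def by force

lemma rewrite_stepI: "rel_pair R l r \<Longrightarrow> rewrite_step R (x @ l @ y) (x @ r @ y)"
  unfolding rewrite_step_def by blast

lemma rewrite_step_sym: "rewrite_step R u v \<Longrightarrow> rewrite_step R v u"
  unfolding rewrite_step_def using rel_pair_sym by blast

lemma rewrite_step_append: "rewrite_step R u v \<Longrightarrow> rewrite_step R (p @ u @ q) (p @ v @ q)"
  unfolding rewrite_step_def by (metis append.assoc)

lemma rewrite_steps_sym: "(rewrite_step R)\<^sup>*\<^sup>* u v \<Longrightarrow> (rewrite_step R)\<^sup>*\<^sup>* v u"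
  by (induction rule: rtranclp_induct)
    (auto intro: converse_rtranclp_into_rtranclp rewrite_step_sym)

lemma rewrite_steps_append:
  "(rewrite_step R)\<^sup>*\<^sup>* u v \<Longrightarrow> (rewrite_step R)\<^sup>*\<^sup>* (p @ u @ q) (p @ v @ q)"
  by (induction rule: rtranclp_induct) (auto intro: rtranclp.rtrancl_into_rtrancl rewrite_step_append)

lemma pres_cong_iff_rewrite_steps: "pres_cong R u v \<longleftrightarrow> (rewrite_step R)\<^sup>*\<^sup>* u v"
proof
  show "pres_cong R u v \<Longrightarrow> (rewrite_step R)\<^sup>*\<^sup>* u v"
  proof (induction rule: pres_cong.induct)
    case (base u v)
    then have "rewrite_step R u v"
      using rewrite_stepI[of R u v "[]" "[]"] by (simp add: rel_pair_def)
    then show ?case by blast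
  qed (auto intro: rewrite_steps_sym rewrite_steps_append)
next
  have step_cong: "pres_cong R u v" if "rewrite_step R u v" for u v
    using that unfolding rewrite_step_def rel_pair_def
    by (auto intro: pres_cong.compat pres_cong.base pres_cong.sym)
  show "(rewrite_step R)\<^sup>*\<^sup>* u v \<Longrightarrow> pres_cong R u v"
    by (induction rule: rtranclp_induct) (auto intro: pres_cong.refl pres_cong.trans step_cong)
qed

lemma relpowp_rewrite_step_prepend:
  "(rewrite_step R ^^ n) u v \<Longrightarrow> (rewrite_step R ^^ n) (p @ u) (p @ v)"
proof (induction n arbitrary: v)
  case (Suc n)
  then obtain w where "(rewrite_step R ^^ n) u w" "rewrite_step R w v"
    by (auto elim: relpowp_Suc_E)
  then show ?case
    using Suc.IH rewrite_step_append[of R w v p "[]"] by (auto intro: relpowp_Suc_I)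
qed simp

lemma relpowp_append_cancel_if_Cons_cancel:
  assumes Cons_cancel: "\<And>j a y z. j < n \<Longrightarrow> (S ^^ j) (a # y) (a # z) \<Longrightarrow> \<exists>k\<le>j. (S ^^ k) y z"
  shows "j < n \<Longrightarrow> (S ^^ j) (x @ y) (x @ z) \<Longrightarrow> \<exists>k\<le>j. (S ^^ k) y z"
proof (induction x arbitrary: j)
  case (Cons c x)
  then obtain j' where "j' \<le> j" "(S ^^ j') (x @ y) (x @ z)"
    using Cons_cancel[of j c "x @ y" "x @ z"] by auto
  then show ?case using Cons.IH[of j'] Cons.prems(1) by (meson le_trans order.strict_trans1)
qed auto

lemma no_repeated_rel_words_sides_distinct:
  assumes "no_repeated_rel_words R" "(l, r) \<in> R"
  shows "l \<noteq> r"
  using inj_onD[OF assms(1)[unfolded no_repeated_rel_words_def], of "((l, r), False)" "((l, r), True)"]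
    assms(2) by auto

lemma no_repeated_rel_words_partner_unique:
  assumes "no_repeated_rel_words R" "rel_pair R n l" "rel_pair R n r"
  shows "l = r"
proof -
  let ?side = "\<lambda>(p :: 'a list \<times> 'a list, b). if b then snd p else fst p"
  have side_inj: "p = q \<and> b = c" if "p \<in> R" "q \<in> R" "?side (p, b) = ?side (q, c)" for p q b c
    using inj_onD[OF assms(1)[unfolded no_repeated_rel_words_def] that(3)] that(1,2) by auto
  from assms(2,3) show ?thesis
    unfolding rel_pair_def
    using side_inj[of "(n, l)" "(n, r)" False False] side_inj[of "(n, l)" "(r, n)" False True]
      side_inj[of "(l, n)" "(n, r)" True False] side_inj[of "(l, n)" "(r, n)" True True]
    by auto
qed

subsection \<open>Consequences of the strong C(4) condition\<close>

locale strongly_C4 =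
  fixes R :: "('a list \<times> 'a list) set"
  assumes strongly_C4: "strongly_C 4 R"
begin

lemma no_repeated_rel_words: "no_repeated_rel_words R"
  and small_overlap_C4: "small_overlap_C 4 R"
  using strongly_C4 unfolding strongly_C_def by auto

lemma not_concat_few_pieces:
  "u \<in> rel_words R \<Longrightarrow> length ps < 4 \<Longrightarrow> \<forall>p\<in>set ps. piece R p \<Longrightarrow> concat ps = u \<Longrightarrow> False"
  using small_overlap_C4 unfolding small_overlap_C_def by blast

lemma rel_word_nonempty: "u \<in> rel_words R \<Longrightarrow> u \<noteq> []"
  using not_concat_few_pieces[of u "[]"] by auto

lemma rel_word_not_piece: "u \<in> rel_words R \<Longrightarrow> piece R u \<Longrightarrow> False"
  using not_concat_few_pieces[of u "[u]"] by auto

lemma rel_word_not_two_pieces: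
  "u \<in> rel_words R \<Longrightarrow> piece R a \<Longrightarrow> piece R b \<Longrightarrow> u = a @ b \<Longrightarrow> False"
  using not_concat_few_pieces[of u "[a, b]"] by auto

lemma pieceI:
  "u \<in> rel_words R \<Longrightarrow> v \<in> rel_words R \<Longrightarrow> u = x1 @ w @ y1 \<Longrightarrow> v = x2 @ w @ y2 \<Longrightarrow>
     u \<noteq> v \<or> length x1 \<noteq> length x2 \<Longrightarrow> piece R w"
  unfolding piece_def is_factor_def occurs_at_def by blast

lemma piece_factor:
  assumes "piece R (p @ q @ r)"
  shows "piece R q"
proof -
  let ?w = "p @ q @ r"
  have occ: "occurs_at q u (i + length p)" if "occurs_at ?w u i" for u i
    using that unfolding occurs_at_def by (metis append.assoc length_append)
  from assms consider "?w = []"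
    | u v where "u \<in> rel_words R" "v \<in> rel_words R" "u \<noteq> v" "is_factor ?w u" "is_factor ?w v"
    | u i j where "u \<in> rel_words R" "i \<noteq> j" "occurs_at ?w u i" "occurs_at ?w u j"
    unfolding piece_def by blast
  then show ?thesis
  proof cases
    case 1
    then show ?thesis by (simp add: piece_def)
  next
    case 2
    then show ?thesis unfolding piece_def is_factor_def using occ by blast
  next
    case (3 u i j)
    moreover have "i + length p \<noteq> j + length p" using \<open>i \<noteq> j\<close> by simp
    ultimately show ?thesis unfolding piece_def using occ[of u i] occ[of u j] by blast
  qed
qed

lemma piece_prefix: "piece R (p @ q) \<Longrightarrow> piece R p"
  using piece_factor[of "[]" p q] by simp

lemma rel_word_factor_eq:
  assumes "m \<in> rel_words R" "n \<in> rel_words R" "n = x @ m @ y"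
  shows "x = [] \<and> y = [] \<and> m = n"
proof (cases "m = n")
  case True
  then have "length (x @ m @ y) = length m" using assms(3) by simp
  then show ?thesis using True by simp
next
  case False
  then have "piece R m" using pieceI[of m n "[]" m "[]" x y] assms by auto
  then show ?thesis using rel_word_not_piece assms(1) by blast
qed

lemma proper_factor_of_rel_word_irreducible:
  assumes "n \<in> rel_words R" "n = p @ w @ q" "p \<noteq> []"
  shows "\<not> rewrite_step R w v"
proof
  assume "rewrite_step R w v"
  then obtain x y l r where "rel_pair R l r" "w = x @ l @ y" unfolding rewrite_step_def by blast
  then show False
    using rel_word_factor_eq[of l n "p @ x" "y @ q"] assms rel_pair_rel_words by auto
qed

text \<open>In the usual notation of small overlap theory, Z m is Z_m and XY m is X_m Y_m.\<close>

definition Z_len :: "'a list \<Rightarrow> nat" where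
  "Z_len m = (GREATEST k. k \<le> length m \<and> piece R (drop (length m - k) m))"

definition Z_part :: "'a list \<Rightarrow> 'a list" where
  "Z_part m = drop (length m - Z_len m) m"

definition XY_part :: "'a list \<Rightarrow> 'a list" where
  "XY_part m = take (length m - Z_len m) m"

lemma Z_len_le_and_Z_part_piece: "Z_len m \<le> length m \<and> piece R (Z_part m)"
proof -
  have "Z_len m \<le> length m \<and> piece R (drop (length m - Z_len m) m)"
    unfolding Z_len_def by (rule GreatestI_nat[of _ 0 "length m"]) (simp_all add: piece_def)
  then show ?thesis by (simp add: Z_part_def)
qed

lemma Z_part_piece: "piece R (Z_part m)"
  using Z_len_le_and_Z_part_piece by blast

lemma length_Z_part: "length (Z_part m) = Z_len m"
  using Z_len_le_and_Z_part_piece unfolding Z_part_def by simp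

lemma piece_suffix_le_Z_len: "m = p @ s \<Longrightarrow> piece R s \<Longrightarrow> length s \<le> Z_len m"
  unfolding Z_len_def by (rule Greatest_le_nat[of _ _ "length m"]) auto

lemma XY_part_Z_part: "XY_part m @ Z_part m = m"
  by (simp add: XY_part_def Z_part_def)

lemma XY_part_not_piece: "m \<in> rel_words R \<Longrightarrow> piece R (XY_part m) \<Longrightarrow> False"
  using rel_word_not_two_pieces[of m "XY_part m" "Z_part m"] Z_part_piece XY_part_Z_part by simp

lemma XY_part_nonempty: "m \<in> rel_words R \<Longrightarrow> XY_part m \<noteq> []"
  using rel_word_not_piece Z_part_piece XY_part_Z_part by (metis append_Nil)

lemma rel_word_prefix_of_XY_part:
  assumes l: "l \<in> rel_words R" and m: "m \<in> rel_words R" and eq: "l @ y = XY_part m @ v"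
  shows "l = m \<and> v = Z_part m @ y"
proof -
  have "l = m"
    using append_eq_append_cases[OF eq]
  proof (elim disjE exE conjE)
    fix z assume "XY_part m = l @ z"
    then have "m = [] @ l @ (z @ Z_part m)" using XY_part_Z_part[of m] by simp
    then show "l = m" using rel_word_factor_eq[OF l m] by blast
  next
    fix z assume "z \<noteq> []" "l = XY_part m @ z" "v = z @ y"
    then have "l \<noteq> m \<Longrightarrow> piece R (XY_part m)"
      using pieceI[OF l m, of "[]" "XY_part m" z "[]" "Z_part m"] XY_part_Z_part[of m] by auto
    then show "l = m" using XY_part_not_piece m by blast
  qed
  moreover from this have "XY_part m @ Z_part m @ y = XY_part m @ v"
    using eq XY_part_Z_part[of m] by (metis append.assoc)
  ultimately show ?thesis by simp
qed

lemma rel_word_not_pieces_before_XY_part: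
  assumes l: "l \<in> rel_words R" and m: "m \<in> rel_words R"
    and ps: "length ps < 3" "\<forall>p\<in>set ps. piece R p" "concat ps \<noteq> []"
    and lw: "l = concat ps @ w" and eq: "XY_part m @ v = w @ y"
  shows False
proof -
  consider u where "XY_part m = w @ u" | u where "w = XY_part m @ u"
    using append_eq_append_cases[OF eq] by metis
  then show False
  proof cases
    case 1
    then have "piece R w"
      using pieceI[OF m l, of "[]" w "u @ Z_part m" "concat ps" "[]"] XY_part_Z_part[of m] lw ps(3)
      by auto
    then show False using not_concat_few_pieces[OF l, of "ps @ [w]"] ps lw by auto
  next
    case 2
    then have "piece R (XY_part m)"
      using pieceI[OF m l, of "[]" "XY_part m" "Z_part m" "concat ps" u] XY_part_Z_part[of m] lw ps(3)
      by auto
    then show False using XY_part_not_piece m by blast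
  qed
qed

lemma rel_word_not_after_piece:
  assumes l: "l \<in> rel_words R" and m: "m \<in> rel_words R" and z: "piece R z" "z \<noteq> []"
    and eq: "l @ y = z @ XY_part m @ v"
  shows False
  using append_eq_append_cases[OF eq]
proof (elim disjE exE conjE)
  fix w assume "z = l @ w"
  then show False using z piece_prefix rel_word_not_piece l by blast
next
  fix w assume "w \<noteq> []" "l = z @ w" "XY_part m @ v = w @ y"
  then show False using rel_word_not_pieces_before_XY_part[OF l m, of "[z]"] z by auto
qed

lemma rel_word_overlapping_XY_part_end:
  assumes n: "n \<in> rel_words R" and m: "m \<in> rel_words R"
    and xs: "XY_part n = x @ s" "x \<noteq> []" and eq: "m @ y = s @ u"
  obtains r where "r \<noteq> []" "m = s @ r" "u = r @ y" "piece R s"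
proof -
  have n_eq: "n = x @ s @ Z_part n" using xs XY_part_Z_part[of n] by simp
  from append_eq_append_cases[OF eq] show thesis
  proof (elim disjE exE conjE)
    fix w assume "s = m @ w"
    then have "n = x @ m @ (w @ Z_part n)" by (subst n_eq) simp
    then show thesis using rel_word_factor_eq[OF m n] xs by blast
  next
    fix r assume "r \<noteq> []" "m = s @ r" "u = r @ y"
    with pieceI[OF n m n_eq, of "[]" r] xs show thesis using that by auto
  qed
qed

text \<open>The invariant under which no relation word can start inside XY n in XY n @ u
(u guarded by Z n); it is preserved by rewriting.\<close>

inductive guarded :: "'a list \<Rightarrow> 'a list \<Rightarrow> bool" where
  prefix: "guarded Z (Z @ t)"
| overlap: "m \<in> rel_words R \<Longrightarrow> Z = P @ P' \<Longrightarrow> guarded (Z_part m) v \<Longrightarrow>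
    guarded Z (P @ XY_part m @ v)"

lemma no_rel_word_starts_inside_XY_part:
  assumes n: "n \<in> rel_words R" and g: "guarded (Z_part n) u" and m: "m \<in> rel_words R"
    and eq: "XY_part n @ u = x @ m @ y" and x: "x \<noteq> []" "length x < length (XY_part n)"
  shows False
proof -
  obtain s where xs: "XY_part n = x @ s" and "s \<noteq> []" and "m @ y = s @ u"
    using append_eq_append_cases[OF eq] x by auto
  then obtain r where "r \<noteq> []" and mr: "m = s @ r" and ur: "u = r @ y" and s: "piece R s"
    using rel_word_overlapping_XY_part_end[OF n m xs x(1)] by blast
  have n_eq: "n = x @ s @ Z_part n" using xs XY_part_Z_part[of n] by simp
  have r_not_prefix: False if "Z_part n = r @ w" for w
  proof -
    have "n = x @ m @ w" by (subst n_eq) (simp add: mr that)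
    then show False using rel_word_factor_eq[OF m n] x by blast
  qed
  from g show False
  proof cases
    case (prefix t)
    with ur consider w where "Z_part n = r @ w" | w where "w \<noteq> []" "r = Z_part n @ w"
      using append_eq_append_cases[of r y "Z_part n" t] by auto
    then show False
    proof cases
      case (2 w)
      have "n = x @ (s @ Z_part n) @ []" using n_eq by (metis append_Nil2 append.assoc)
      then have "piece R (s @ Z_part n)"
        using pieceI[OF n m, of x "s @ Z_part n" "[]" "[]" w] mr 2 x by auto
      then have "length (s @ Z_part n) \<le> Z_len n" using piece_suffix_le_Z_len[OF n_eq] by blast
      then show False using length_Z_part[of n] \<open>s \<noteq> []\<close> by simp
    qed (use r_not_prefix in blast)
  next
    case (overlap m' P P' v)
    with ur consider w where "P = r @ w" | q where "q \<noteq> []" "r = P @ q" "q @ y = XY_part m' @ v"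
      using append_eq_append_cases[of r y P "XY_part m' @ v"] by auto
    then show False
    proof cases
      case (1 w)
      then show False using r_not_prefix[of "w @ P'"] overlap(3) by simp
    next
      case (2 q)
      have "piece R P" using Z_part_piece[of n] overlap(3) piece_prefix by metis
      then show False
        using rel_word_not_pieces_before_XY_part[OF m overlap(2), of "[s, P]" q v y] s mr 2 \<open>s \<noteq> []\<close>
        by auto
    qed
  qed
qed


lemma guarded_prefix_rewrite_step:
  assumes "rewrite_step R (Z @ t) u'"
  shows "guarded Z u'"
proof -
  obtain x y l r where lr: "rel_pair R l r" and eq: "Z @ t = x @ l @ y" and u': "u' = x @ r @ y"
    using assms unfolding rewrite_step_def by blast
  from append_eq_append_cases[OF eq] show ?thesis
  proof (elim disjE exE conjE)
    fix w assume "x = Z @ w" "t = w @ l @ y"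
    then show ?thesis using u' guarded.prefix[of Z "w @ r @ y"] by simp
  next
    fix w assume "w \<noteq> []" "Z = x @ w" "l @ y = w @ t"
    have "r \<in> rel_words R" using rel_pair_rel_words[OF lr] by blast
    from guarded.overlap[OF this \<open>Z = x @ w\<close> guarded.prefix[of "Z_part r" y]]
    show ?thesis using u' XY_part_Z_part[of r] by (metis append.assoc)
  qed
qed

lemma guarded_rewrite_step:
  "guarded Z u \<Longrightarrow> piece R Z \<Longrightarrow> rewrite_step R u u' \<Longrightarrow> guarded Z u'"
proof (induction arbitrary: u' rule: guarded.induct)
  case (prefix Z t)
  then show ?case using guarded_prefix_rewrite_step by blast
next
  case (overlap m Z P P' v)
  then obtain x y l r where lr: "rel_pair R l r" and eq: "P @ XY_part m @ v = x @ l @ y"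
    and u': "u' = x @ r @ y"
    unfolding rewrite_step_def by blast
  have l: "l \<in> rel_words R" and r: "r \<in> rel_words R" using rel_pair_rel_words[OF lr] by auto
  from append_eq_append_cases[OF eq] show ?case
  proof (elim disjE exE conjE)
    fix w assume x: "x = P @ w" and eq': "XY_part m @ v = w @ l @ y"
    from append_eq_append_cases[OF eq'] show ?case
    proof (elim disjE exE conjE)
      fix w' assume w: "w = XY_part m @ w'" and "v = w' @ l @ y"
      then have "guarded (Z_part m) (w' @ r @ y)"
        using overlap.IH Z_part_piece rewrite_stepI[OF lr] by blast
      then show ?case using guarded.overlap[OF overlap.hyps(1,2)] u' x w by simp
    next
      fix w' assume "w' \<noteq> []" and XY: "XY_part m = w @ w'" and "l @ y = w' @ v"
      show ?case
      proof (cases "w = []")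
        case True
        with XY \<open>l @ y = w' @ v\<close> have "l @ y = XY_part m @ v" by simp
        then have "v = Z_part m @ y" using rel_word_prefix_of_XY_part[OF l overlap.hyps(1)] by blast
        moreover have "u' = P @ XY_part r @ Z_part r @ y" using u' x True XY_part_Z_part[of r] by simp
        ultimately show ?thesis using guarded.overlap[OF r overlap.hyps(2) guarded.prefix] by simp
      next
        case False
        then show ?thesis
          using no_rel_word_starts_inside_XY_part[OF overlap.hyps(1,3) l eq'] XY \<open>w' \<noteq> []\<close> by simp
      qed
    qed
  next
    fix z assume "z \<noteq> []" "P = x @ z" "l @ y = z @ XY_part m @ v"
    moreover have "piece R z" using overlap.prems(1) overlap.hyps(2) \<open>P = x @ z\<close> piece_factor[of x z P'] by simp
    ultimately show ?case using rel_word_not_after_piece[OF l overlap.hyps(1)] by blast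
  qed
qed

lemma guarded_rewrite_steps:
  "(rewrite_step R)\<^sup>*\<^sup>* u u' \<Longrightarrow> guarded Z u \<Longrightarrow> piece R Z \<Longrightarrow> guarded Z u'"
  by (induction rule: rtranclp_induct) (auto intro: guarded_rewrite_step)

lemma rewrite_step_Cons_cases:
  assumes "rewrite_step R (a # y) w"
  shows "(\<exists>y'. w = a # y' \<and> rewrite_step R y y') \<or>
    (\<exists>l t m. y = l @ t \<and> rel_pair R (a # l) m \<and> w = m @ t)"
proof -
  obtain x t l r where lr: "rel_pair R l r" and e1: "a # y = x @ l @ t" and e2: "w = x @ r @ t"
    using assms unfolding rewrite_step_def by blast
  show ?thesis
  proof (cases x)
    case Nil
    obtain l' where "l = a # l'" "y = l' @ t"
      using e1 Nil rel_word_nonempty rel_pair_rel_words[OF lr] by (cases l) auto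
    then show ?thesis using lr e2 Nil by auto
  next
    case (Cons c x')
    then show ?thesis using e1 e2 rewrite_stepI[OF lr, of x'] by auto
  qed
qed

lemma relpowp_rewrite_step_Cons_cases:
  "(rewrite_step R ^^ n) (a # y) w \<Longrightarrow>
     (\<exists>y'. w = a # y' \<and> (rewrite_step R ^^ n) y y') \<or>
     (\<exists>i l t m k. Suc (i + k) = n \<and> (rewrite_step R ^^ i) y (l @ t) \<and> rel_pair R (a # l) m \<and>
        (rewrite_step R ^^ k) (m @ t) w)"
proof (induction n arbitrary: w)
  case (Suc n)
  from Suc.prems obtain w1 where h1: "(rewrite_step R ^^ n) (a # y) w1" and h2: "rewrite_step R w1 w"
    by (auto elim: relpowp_Suc_E)
  from Suc.IH[OF h1] show ?case
  proof (elim disjE exE conjE)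
    fix y' assume w1: "w1 = a # y'" and y: "(rewrite_step R ^^ n) y y'"
    from rewrite_step_Cons_cases[OF h2[unfolded w1]] show ?case
    proof (elim disjE exE conjE)
      fix y'' assume "w = a # y''" "rewrite_step R y' y''"
      then show ?case using y by (auto intro: relpowp_Suc_I)
    next
      fix l t m assume "y' = l @ t" "rel_pair R (a # l) m" "w = m @ t"
      then show ?case using y
        by (intro disjI2 exI[of _ n] exI[of _ l] exI[of _ t] exI[of _ m] exI[of _ 0]) auto
    qed
  next
    fix i l t m k
    assume "Suc (i + k) = n" "(rewrite_step R ^^ i) y (l @ t)" "rel_pair R (a # l) m"
      "(rewrite_step R ^^ k) (m @ t) w1"
    then show ?case using h2
      by (intro disjI2 exI[of _ i] exI[of _ l] exI[of _ t] exI[of _ m] exI[of _ "Suc k"])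
        (auto intro: relpowp_Suc_I)
  qed
qed simp

lemma rewrite_step_XY_part_cases:
  assumes m: "m \<in> rel_words R" and g: "guarded (Z_part m) u"
    and step: "rewrite_step R (XY_part m @ u) w"
  shows "(\<exists>u'. w = XY_part m @ u' \<and> rewrite_step R u u') \<or>
    (\<exists>t r. u = Z_part m @ t \<and> rel_pair R m r \<and> w = r @ t)"
proof -
  obtain x t l r where lr: "rel_pair R l r" and e1: "XY_part m @ u = x @ l @ t"
    and e2: "w = x @ r @ t"
    using step unfolding rewrite_step_def by blast
  have l: "l \<in> rel_words R" using rel_pair_rel_words[OF lr] by blast
  from append_eq_append_cases[OF e1] show ?thesis
  proof (elim disjE exE conjE)
    fix v assume "x = XY_part m @ v" "u = v @ l @ t"
    then show ?thesis using e2 rewrite_stepI[OF lr] by auto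
  next
    fix v assume "v \<noteq> []" "XY_part m = x @ v" "l @ t = v @ u"
    show ?thesis
    proof (cases "x = []")
      case False
      then show ?thesis
        using no_rel_word_starts_inside_XY_part[OF m g l e1] \<open>XY_part m = x @ v\<close> \<open>v \<noteq> []\<close> by simp
    next
      case True
      with \<open>XY_part m = x @ v\<close> \<open>l @ t = v @ u\<close> have "l @ t = XY_part m @ u" by simp
      then have "l = m" "u = Z_part m @ t" using rel_word_prefix_of_XY_part[OF l m] by blast+
      then show ?thesis using lr e2 True by auto
    qed
  qed
qed

lemma relpowp_rewrite_step_XY_part_cases:
  "m \<in> rel_words R \<Longrightarrow> guarded (Z_part m) u \<Longrightarrow> (rewrite_step R ^^ k) (XY_part m @ u) w \<Longrightarrow>
     (\<exists>u'. w = XY_part m @ u' \<and> (rewrite_step R ^^ k) u u') \<or>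
     (\<exists>j t r i. Suc (j + i) = k \<and> (rewrite_step R ^^ j) u (Z_part m @ t) \<and> rel_pair R m r \<and>
        (rewrite_step R ^^ i) (r @ t) w)"
proof (induction k arbitrary: w)
  case (Suc k)
  note m = Suc.prems(1) and g = Suc.prems(2)
  from Suc.prems obtain w1 where h1: "(rewrite_step R ^^ k) (XY_part m @ u) w1"
    and h2: "rewrite_step R w1 w"
    by (auto elim: relpowp_Suc_E)
  from Suc.IH[OF m g h1] show ?case
  proof (elim disjE exE conjE)
    fix u' assume w1: "w1 = XY_part m @ u'" and u: "(rewrite_step R ^^ k) u u'"
    have "guarded (Z_part m) u'"
      using guarded_rewrite_steps[OF relpowp_imp_rtranclp[OF u] g Z_part_piece] .
    from rewrite_step_XY_part_cases[OF m this h2[unfolded w1]] show ?case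
    proof (elim disjE exE conjE)
      fix u'' assume "w = XY_part m @ u''" "rewrite_step R u' u''"
      then show ?case using u by (auto intro: relpowp_Suc_I)
    next
      fix t r assume "u' = Z_part m @ t" "rel_pair R m r" "w = r @ t"
      then show ?case using u
        by (intro disjI2 exI[of _ k] exI[of _ t] exI[of _ r] exI[of _ 0]) auto
    qed
  next
    fix j t r i assume "Suc (j + i) = k" "(rewrite_step R ^^ j) u (Z_part m @ t)" "rel_pair R m r"
      "(rewrite_step R ^^ i) (r @ t) w1"
    then show ?case using h2
      by (intro disjI2 exI[of _ j] exI[of _ t] exI[of _ r] exI[of _ "Suc i"]) (auto intro: relpowp_Suc_I)
  qed
qed simp

lemma common_head_not_left_cancellative:
  assumes rel: "(a # r, a # s) \<in> R"
  shows "\<not> left_cancellative R"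
proof
  assume "left_cancellative R"
  moreover have "pres_cong R ([a] @ r) ([a] @ s)" using rel by (simp add: pres_cong.base)
  ultimately have "pres_cong R r s" unfolding left_cancellative_def by blast
  then have steps: "(rewrite_step R)\<^sup>*\<^sup>* r s" by (simp only: pres_cong_iff_rewrite_steps)
  have "a # r \<in> rel_words R" unfolding rel_words_def by (intro UnI1 rev_image_eqI[OF rel]) simp
  then have irreducible: "\<not> rewrite_step R r v" for v
    by (rule proper_factor_of_rel_word_irreducible[where p = "[a]" and q = "[]"]) simp_all
  from steps have "r = s" by (cases rule: converse_rtranclpE) (use irreducible in blast)+
  then show False using no_repeated_rel_words_sides_distinct[OF no_repeated_rel_words rel] by simp
qed

end

subsection \<open>Left cancellativity\<close>

locale strongly_C4_distinct_heads = strongly_C4 +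
  assumes distinct_heads: "\<not> (\<exists>a r s. (a # r, a # s) \<in> R)"
begin

lemma rel_pair_distinct_heads: "rel_pair R (a # l) (c # r) \<Longrightarrow> c \<noteq> a"
  using distinct_heads unfolding rel_pair_def by blast

lemma relpowp_Cons_cancel:
  "(rewrite_step R ^^ n) (a # y) (a # z) \<Longrightarrow> \<exists>k\<le>n. (rewrite_step R ^^ k) y z"
proof (induction n arbitrary: a y z rule: less_induct)
  case (less n)
  from relpowp_rewrite_step_Cons_cases[OF less.prems] show ?case
  proof (elim disjE exE conjE)
    fix i l t m k
    assume n: "Suc (i + k) = n" and y: "(rewrite_step R ^^ i) y (l @ t)"
      and lm: "rel_pair R (a # l) m" and k: "(rewrite_step R ^^ k) (m @ t) (a # z)"
    have m: "m \<in> rel_words R" using rel_pair_rel_words[OF lm] by blast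
    have "(rewrite_step R ^^ k) (XY_part m @ Z_part m @ t) (a # z)"
      using k XY_part_Z_part[of m] by (metis append.assoc)
    from relpowp_rewrite_step_XY_part_cases[OF m guarded.prefix this] show ?case
    proof (elim disjE exE conjE)
      fix u' assume az: "a # z = XY_part m @ u'"
      obtain c cs where XY: "XY_part m = c # cs" using XY_part_nonempty[OF m] by (cases "XY_part m") auto
      then have "m = c # cs @ Z_part m" using XY_part_Z_part[of m] by simp
      then show ?case using rel_pair_distinct_heads lm az XY by (metis Cons_eq_appendI list.inject)
    next
      fix j t' r k'
      assume k': "Suc (j + k') = k" and t: "(rewrite_step R ^^ j) (Z_part m @ t) (Z_part m @ t')"
        and mr: "rel_pair R m r" and r: "(rewrite_step R ^^ k') (r @ t') (a # z)"
      have "r = a # l"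
        using no_repeated_rel_words_partner_unique[OF no_repeated_rel_words mr rel_pair_sym[OF lm]] .
      with r k' n obtain k3 where k3: "k3 \<le> k'" "(rewrite_step R ^^ k3) (l @ t') z"
        using less.IH[of k' a "l @ t'" z] by auto
      have "\<exists>j'\<le>j. (rewrite_step R ^^ j') t t'"
        by (rule relpowp_append_cancel_if_Cons_cancel[where n = n and x = "Z_part m"])
          (fact less.IH, use t k' n in auto)
      then obtain j' where j': "j' \<le> j" "(rewrite_step R ^^ j') t t'" by blast
      have "(rewrite_step R ^^ (i + j' + k3)) y z"
        unfolding relpowp_add using y relpowp_rewrite_step_prepend[OF j'(2)] k3(2) by blast
      moreover have "i + j' + k3 \<le> n" using k' n j' k3 by simp
      ultimately show ?case by blast
    qed
  qed auto
qed

lemma rewrite_steps_append_cancel: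
  assumes "(rewrite_step R)\<^sup>*\<^sup>* (x @ y) (x @ z)"
  shows "(rewrite_step R)\<^sup>*\<^sup>* y z"
proof -
  obtain n where "(rewrite_step R ^^ n) (x @ y) (x @ z)"
    using rtranclp_imp_relpowp[OF assms] by blast
  then obtain k where "(rewrite_step R ^^ k) y z"
    using relpowp_append_cancel_if_Cons_cancel[where n = "Suc n" and S = "rewrite_step R"]
      relpowp_Cons_cancel by blast
  then show ?thesis by (rule relpowp_imp_rtranclp)
qed

lemma left_cancellative: "left_cancellative R"
  unfolding left_cancellative_def pres_cong_iff_rewrite_steps
  using rewrite_steps_append_cancel by blast

end

theorem corollary7:
  fixes R :: "('a list \<times> 'a list) set"
  assumes "strongly_C 4 R"
  shows "left_cancellative R \<longleftrightarrow> \<not> (\<exists>a r s. (a # r, a # s) \<in> R)"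
proof -
  interpret strongly_C4 R using assms by unfold_locales
  show ?thesis
  proof
    assume "left_cancellative R"
    then show "\<not> (\<exists>a r s. (a # r, a # s) \<in> R)" using common_head_not_left_cancellative by blast
  next
    assume "\<not> (\<exists>a r s. (a # r, a # s) \<in> R)"
    then interpret strongly_C4_distinct_heads R by unfold_locales
    show "left_cancellative R" by (rule left_cancellative)
  qed
qed

end
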